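(* Let $N\ge 2$ be an integer and $\kappa,m>0$. For every fixed $k_1\in\mathbb{Z}\cap(0,N)$, $$\sum_{\substack{k_2,k_3,k_4\in\mathbb{Z}\cap(0,N)\\ k_1-k_2-k_3-k_4\equiv 0\ (\mathrm{mod}\ N)}}\big|A^{(1)}_{1,2,3,4}\big|^2+\sum_{\substack{k_2,k_3,k_4\in\mathbb{Z}\cap(0,N)\\ k_1-k_2+k_3+k_4\equiv 0\ (\mathrm{mod}\ N)}}\big|A^{(2)}_{1,2,3,4}\big|^2+\sum_{\substack{k_2,k_3,k_4\in\mathbb{Z}\cap(0,N)\\ k_1+k_2+k_3+k_4\equiv 0\ (\mathrm{mod}\ N)}}\big|A^{(3)}_{1,2,3,4}\big|^2\le C\,N^2\log N,$$ where $C>0$ is a constant depending only on $\kappa$ and $m$ (in particular independent of $N$ and $k_1$).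
   Context: For an integer $N\ge 2$ and constants $\kappa,m>0$, define for $k\in\mathbb{Z}$ the frequency $\omega_k=2\sqrt{\kappa/m}\,\big|\sin(\pi k/N)\big|$ and the $2N$-periodic sign function $\iota(x)=\operatorname{sgn}\sin(\pi x/N)$. For integers $k_1,k_2,k_3,k_4$ (abbreviated by their indices $1,2,3,4$) set $$T_{1,2,3,4}=-\frac{3}{4\kappa^2}\,\iota(k_2+k_3+k_4)\,\iota(k_2)\,\iota(k_3)\,\iota(k_4)\prod_{i=1}^4\sqrt{\omega_{k_i}},$$ and let $T_{1,-2,3,4}$ denote the same expression with $k_2$ replaced by $-k_2$, i.e. $-\frac{3}{4\kappa^2}\iota(-k_2+k_3+k_4)\iota(-k_2)\iota(k_3)\iota(k_4)\prod_{i=1}^4\sqrt{\omega_{k_i}}$. Define $$A^{(1)}_{1,2,3,4}=-\frac{T_{1,2,3,4}}{\omega_{k_1}-\omega_{k_2}-\omega_{k_3}-\omega_{k_4}},\quad A^{(2)}_{1,2,3,4}=-\frac{T_{1,-2,3,4}}{\omega_{k_1}-\omega_{k_2}+\omega_{k_3}+\omega_{k_4}},\quad A^{(3)}_{1,2,3,4}=-\frac{T_{1,2,3,4}}{\omega_{k_1}+\omega_{k_2}+\omega_{k_3}+\omega_{k_4}}.$$ On the respective summation ranges (all $k_i\in\mathbb{Z}\cap(0,N)$ with the stated congruence mod $N$) the denominators do not vanish. These are the coefficients of the normal form transformation removing non-resonant quartic terms in the $\beta$-FPUT chain. *)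

theory Defs
  imports Complex_Main
begin

definition omega :: "real \<Rightarrow> real \<Rightarrow> int \<Rightarrow> int \<Rightarrow> real" where
  "omega \<kappa> m N k = 2 * sqrt (\<kappa> / m) * \<bar>sin (pi * real_of_int k / real_of_int N)\<bar>"

definition iota :: "int \<Rightarrow> int \<Rightarrow> real" where
  "iota N x = sgn (sin (pi * real_of_int x / real_of_int N))"

definition Tc :: "real \<Rightarrow> real \<Rightarrow> int \<Rightarrow> int \<Rightarrow> int \<Rightarrow> int \<Rightarrow> int \<Rightarrow> real" where
  "Tc \<kappa> m N k1 k2 k3 k4 =
     - 3 / (4 * \<kappa>^2) * iota N (k2 + k3 + k4) * iota N k2 * iota N k3 * iota N k4
     * sqrt (omega \<kappa> m N k1) * sqrt (omega \<kappa> m N k2)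
     * sqrt (omega \<kappa> m N k3) * sqrt (omega \<kappa> m N k4)"

text \<open>T_{1,-2,3,4}: the same expression with k2 replaced by -k2 in the iota factors,
  exactly as written in the paper (the omega product uses k2; omega is even anyway).\<close>
definition Tm :: "real \<Rightarrow> real \<Rightarrow> int \<Rightarrow> int \<Rightarrow> int \<Rightarrow> int \<Rightarrow> int \<Rightarrow> real" where
  "Tm \<kappa> m N k1 k2 k3 k4 =
     - 3 / (4 * \<kappa>^2) * iota N (- k2 + k3 + k4) * iota N (- k2) * iota N k3 * iota N k4
     * sqrt (omega \<kappa> m N k1) * sqrt (omega \<kappa> m N k2)
     * sqrt (omega \<kappa> m N k3) * sqrt (omega \<kappa> m N k4)"

definition A1 :: "real \<Rightarrow> real \<Rightarrow> int \<Rightarrow> int \<Rightarrow> int \<Rightarrow> int \<Rightarrow> int \<Rightarrow> real" where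
  "A1 \<kappa> m N k1 k2 k3 k4 = - Tc \<kappa> m N k1 k2 k3 k4 /
     (omega \<kappa> m N k1 - omega \<kappa> m N k2 - omega \<kappa> m N k3 - omega \<kappa> m N k4)"

definition A2 :: "real \<Rightarrow> real \<Rightarrow> int \<Rightarrow> int \<Rightarrow> int \<Rightarrow> int \<Rightarrow> int \<Rightarrow> real" where
  "A2 \<kappa> m N k1 k2 k3 k4 = - Tm \<kappa> m N k1 k2 k3 k4 /
     (omega \<kappa> m N k1 - omega \<kappa> m N k2 + omega \<kappa> m N k3 + omega \<kappa> m N k4)"

definition A3 :: "real \<Rightarrow> real \<Rightarrow> int \<Rightarrow> int \<Rightarrow> int \<Rightarrow> int \<Rightarrow> int \<Rightarrow> real" where
  "A3 \<kappa> m N k1 k2 k3 k4 = - Tc \<kappa> m N k1 k2 k3 k4 /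
     (omega \<kappa> m N k1 + omega \<kappa> m N k2 + omega \<kappa> m N k3 + omega \<kappa> m N k4)"

end

theory Submission
  imports Defs
begin

(*
  Write x_k = pi k / N. Then omega_k = 2 sqrt(kappa/m) sin x_k and T^2 <= 9/(kappa m)^2 times the
  product of the four sines, so each |A|^2 is at most 9/(4 kappa^3 m) times
  sin x_a sin x_b sin x_c sin x_d / (sin x_b + sin x_c + sin x_d - sin x_a)^2, where the mode a
  carrying the sign opposite to the others is k1 for A1 and k2 for A2. The resonance condition
  forces x_a = x_b + x_c + x_d - j pi with j in {0, 1, 2}. For j = 0 the denominator is
  4 sin((b+c)/2) sin((c+d)/2) sin((b+d)/2), and sin y >= y/3 with AM-GM bounds the ratio by
  C / max(x_b, x_c)^2; j = 2 reduces to j = 0 under x -> pi - x; for j = 1 both sin b sin c and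
  sin a sin d are differences of squares and the ratio is at most 1. For A3 all sines enter with
  the same sign and the ratio is at most 1. Finally the third index is determined mod N by the
  other two, and summing C N^2 / max(b, c)^2 over [1, N-1]^2 gives O(N^2 log N).
*)

lemma cos_ge_one_minus_half_sq: "1 - x\<^sup>2 / 2 \<le> cos (x :: real)"
proof -
  have "(sin (x / 2))\<^sup>2 \<le> (x / 2)\<^sup>2"
    using abs_sin_x_le_abs_x[of "x / 2"] by (simp only: abs_le_square_iff)
  moreover have "cos x = 1 - 2 * (sin (x / 2))\<^sup>2" using cos_double_sin[of "x / 2"] by simp
  ultimately show ?thesis by (simp add: power_divide)
qed

lemma sin_ge_cubic:
  fixes x :: real assumes "0 \<le> x" shows "x - x ^ 3 / 6 \<le> sin x"
proof -
  let ?f = "\<lambda>x. sin x - x + x ^ 3 / 6"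
  have "(?f has_real_derivative cos u - 1 + u\<^sup>2 / 2) (at u)" for u
    by (auto intro!: derivative_eq_intros simp: power2_eq_square)
  moreover have "0 \<le> cos u - 1 + u\<^sup>2 / 2" for u :: real
    using cos_ge_one_minus_half_sq[of u] by linarith
  ultimately have "?f 0 \<le> ?f x"
    by (intro DERIV_nonneg_imp_nondecreasing[OF assms]) blast
  then show ?thesis by simp
qed

lemma sin_ge_third:
  fixes y :: real assumes "0 \<le> y" "y \<le> pi / 2" shows "y / 3 \<le> sin y"
proof -
  have "y * y \<le> 2 * 2" using assms pi_less_4 by (intro mult_mono) auto
  then have "y * (y * y) \<le> y * 4" using assms(1) by (intro mult_left_mono) auto
  then have "y / 3 \<le> y - y ^ 3 / 6" by (simp add: power3_eq_cube)
  with sin_ge_cubic[OF assms(1)] show ?thesis by linarith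
qed

lemma sin_add3_diff_eq_prod:
  fixes b c d :: real
  shows "sin b + sin c + sin d - sin (b + c + d)
    = 4 * sin ((b + c) / 2) * sin ((c + d) / 2) * sin ((b + d) / 2)"
proof -
  have prod: "sin (p + (r - q)) + sin (p + (q - r)) + sin (q + (r - p)) - sin (p + (q + r))
      = 4 * sin p * sin q * sin r" for p q r :: real
    by (simp add: sin_add sin_diff cos_add cos_diff algebra_simps)
  have "(b + c) / 2 + ((b + d) / 2 - (c + d) / 2) = b"
    "(b + c) / 2 + ((c + d) / 2 - (b + d) / 2) = c"
    "(c + d) / 2 + ((b + d) / 2 - (b + c) / 2) = d"
    "(b + c) / 2 + ((c + d) / 2 + (b + d) / 2) = b + c + d"
    by (simp_all add: field_simps)
  with prod[of "(b + c) / 2" "(b + d) / 2" "(c + d) / 2"] show ?thesis by simp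
qed

lemma sin_add_mult_sin_diff: "sin (x + y) * sin (x - y) = (sin x)\<^sup>2 - (sin y)\<^sup>2"
  for x y :: real
  using cos_double_sin[of x] cos_double_sin[of y] unfolding sin_times_sin by simp

lemma sin_add_mult_sin_diff_cos: "sin (x + y) * sin (x - y) = (cos y)\<^sup>2 - (cos x)\<^sup>2"
  for x y :: real
  unfolding sin_add_mult_sin_diff sin_squared_eq by simp

lemma cube_sum_mult_prod_le_pair_sums_sq:
  fixes b c d :: real assumes "0 \<le> b" "0 \<le> c" "0 \<le> d"
  shows "(b + c + d) ^ 3 * (b * c * d) \<le> 27 / 64 * ((b + c) * (c + d) * (b + d))\<^sup>2"
proof -
  define X Y Z where "X = b + c + d" and "Y = b * c + c * d + d * b" and "Z = b * c * d"
  have P: "(b + c) * (c + d) * (b + d) = X * Y - Z"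
    unfolding X_def Y_def Z_def by (simp add: algebra_simps)
  have "X * Y - 9 * Z = b * (c - d)\<^sup>2 + c * (b - d)\<^sup>2 + d * (b - c)\<^sup>2"
    unfolding X_def Y_def Z_def by (simp add: power2_eq_square algebra_simps)
  moreover have "0 \<le> b * (c - d)\<^sup>2 + c * (b - d)\<^sup>2 + d * (b - c)\<^sup>2" using assms by simp
  ultimately have amgm: "9 * Z \<le> X * Y" by linarith
  have "Y\<^sup>2 - 3 * Z * X = ((b * c - c * d)\<^sup>2 + (c * d - d * b)\<^sup>2 + (b * c - d * b)\<^sup>2) / 2"
    unfolding X_def Y_def Z_def by (simp add: power2_eq_square algebra_simps)
  moreover have "0 \<le> ((b * c - c * d)\<^sup>2 + (c * d - d * b)\<^sup>2 + (b * c - d * b)\<^sup>2) / 2" by simp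
  ultimately have "3 * Z * X \<le> Y\<^sup>2" by linarith
  then have "64 / 81 * X\<^sup>2 * (3 * Z * X) \<le> 64 / 81 * X\<^sup>2 * Y\<^sup>2"
    by (intro mult_left_mono) auto
  then have "X ^ 3 * Z * (64 / 27) \<le> (8 / 9 * (X * Y))\<^sup>2"
    by (simp add: power2_eq_square power3_eq_cube algebra_simps)
  also have "\<dots> \<le> (X * Y - Z)\<^sup>2"
    using amgm assms unfolding X_def Y_def by (intro power_mono) auto
  finally show ?thesis unfolding P X_def Z_def by simp
qed

lemma diff_sq_mult_diff_sq_le:
  fixes A B S T :: real assumes "0 \<le> B" "B \<le> A" "0 \<le> T" "T \<le> S"
  shows "(A\<^sup>2 - B\<^sup>2) * (S\<^sup>2 - T\<^sup>2) \<le> 4 * (S * A - B * T)\<^sup>2"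
proof -
  have "(A + B) * (S + T) \<le> (2 * A) * (2 * S)"
    using assms by (intro mult_mono) auto
  then have sums: "((A - B) * (S - T)) * ((A + B) * (S + T)) \<le> ((A - B) * (S - T)) * (4 * A * S)"
    using assms by (intro mult_left_mono) auto
  have "S * (A - B) \<le> S * A - B * T" "A * (S - T) \<le> S * A - B * T"
    using assms by (auto simp: algebra_simps intro: mult_right_mono mult_left_mono)
  moreover have "B * T \<le> S * A" using mult_mono[of B A T S] assms by (simp add: mult.commute)
  ultimately have "(S * (A - B)) * (A * (S - T)) \<le> (S * A - B * T) * (S * A - B * T)"
    using assms by (intro mult_mono) auto
  with sums show ?thesis by (simp add: power2_eq_square algebra_simps)
qed

lemma sin_prod_le_no_wrap:
  fixes b c d :: real assumes "0 < b" "0 < c" "0 < d" "b + c + d < pi"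
  shows "sin (b + c + d) * sin b * sin c * sin d * (b + c + d)\<^sup>2
    \<le> 1300 * (sin b + sin c + sin d - sin (b + c + d))\<^sup>2"
proof -
  define a P where "a = b + c + d" and "P = (b + c) * (c + d) * (b + d)"
  have "(b + c) / 6 * ((c + d) / 6) * ((b + d) / 6)
      \<le> sin ((b + c) / 2) * sin ((c + d) / 2) * sin ((b + d) / 2)"
    using assms sin_ge_third[of "(b + c) / 2"] sin_ge_third[of "(c + d) / 2"]
      sin_ge_third[of "(b + d) / 2"]
    by (intro mult_mono) auto
  then have "P / 54 \<le> sin b + sin c + sin d - sin a"
    unfolding a_def P_def sin_add3_diff_eq_prod by simp
  moreover have "0 \<le> P / 54" using assms unfolding P_def by simp
  ultimately have defect: "(P / 54)\<^sup>2 \<le> (sin b + sin c + sin d - sin a)\<^sup>2"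
    by (rule power_mono)
  have "sin a * sin b * sin c * sin d \<le> a * b * c * d"
    using assms sin_x_le_x sin_ge_zero unfolding a_def
    by (intro mult_mono) (auto intro: mult_nonneg_nonneg)
  then have "sin a * sin b * sin c * sin d * a\<^sup>2 \<le> a * b * c * d * a\<^sup>2"
    by (intro mult_right_mono) auto
  also have "\<dots> = a ^ 3 * (b * c * d)" by (simp add: power2_eq_square power3_eq_cube)
  also have "\<dots> \<le> 27 / 64 * P\<^sup>2"
    unfolding a_def P_def using assms by (intro cube_sum_mult_prod_le_pair_sums_sq) auto
  also have "\<dots> \<le> 1300 * (P / 54)\<^sup>2" \<comment> \<open>\<open>27 * 54\<^sup>2 / 64 < 1300\<close>\<close>
    by (simp add: power_divide)
  also have "\<dots> \<le> 1300 * (sin b + sin c + sin d - sin a)\<^sup>2" using defect by simp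
  finally show ?thesis unfolding a_def .
qed

lemma sin_prod_le_one_wrap:
  fixes a b c d :: real
  assumes "0 < a" "a < pi" "0 < b" "b < pi" "0 < c" "c < pi" "0 < d" "d < pi"
    and "a + pi = b + c + d"
  shows "sin a * sin b * sin c * sin d \<le> (sin b + sin c + sin d - sin a)\<^sup>2"
proof -
  \<comment> \<open>With \<open>b, c = p \<plusminus> v\<close> and \<open>a, pi - d = p \<plusminus> w\<close>, both \<open>sin b * sin c\<close> and
    \<open>sin a * sin d\<close> become differences of squares.\<close>
  define p v w where "p = (b + c) / 2" and "v = (b - c) / 2" and "w = (a + d - pi) / 2"
  have "b = p + v" "c = p - v" "a = p + w" "p - w = pi - d"
    unfolding p_def v_def w_def using assms(9) by (simp_all add: field_simps)
  then have b: "sin b = sin (p + v)" and c: "sin c = sin (p - v)"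
    and a: "sin a = sin (p + w)" and d: "sin d = sin (p - w)" by simp_all
  have sines: "0 < sin a" "0 < sin b" "0 < sin c" "0 < sin d"
    using assms(1-8) by (simp_all add: sin_gt_zero)
  have cos_v: "0 < cos v" unfolding v_def using assms by (intro cos_gt_zero_pi) auto
  have sin_p: "0 < sin p" unfolding p_def using assms by (intro sin_gt_zero) auto
  have bc: "sin b * sin c = (cos v)\<^sup>2 - \<bar>cos p\<bar>\<^sup>2"
    unfolding b c sin_add_mult_sin_diff_cos by simp
  have ad: "sin a * sin d = (sin p)\<^sup>2 - \<bar>sin w\<bar>\<^sup>2"
    unfolding a d sin_add_mult_sin_diff by simp
  have "0 < sin b * sin c" "0 < sin a * sin d" using sines by simp_all
  then have "\<bar>cos p\<bar>\<^sup>2 \<le> (cos v)\<^sup>2" "\<bar>sin w\<bar>\<^sup>2 \<le> (sin p)\<^sup>2"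
    unfolding bc ad by simp_all
  then have cos_p: "\<bar>cos p\<bar> \<le> cos v" and sin_w: "\<bar>sin w\<bar> \<le> sin p"
    using cos_v sin_p by (auto intro: power2_le_imp_le)
  have "sin a * sin b * sin c * sin d = (sin b * sin c) * (sin a * sin d)" by simp
  also have "\<dots> \<le> 4 * (sin p * cos v - \<bar>cos p\<bar> * \<bar>sin w\<bar>)\<^sup>2"
    unfolding bc ad using cos_p sin_w by (intro diff_sq_mult_diff_sq_le) auto
  also have "\<dots> \<le> 4 * (sin p * cos v - cos p * sin w)\<^sup>2"
  proof -
    have "\<bar>cos p\<bar> * \<bar>sin w\<bar> \<le> cos v * sin p"
      using cos_p sin_w by (intro mult_mono) auto
    moreover have "cos p * sin w \<le> \<bar>cos p\<bar> * \<bar>sin w\<bar>" by (metis abs_ge_self abs_mult)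
    ultimately show ?thesis by (simp add: power_mono mult.commute)
  qed
  also have "\<dots> = (2 * (sin p * cos v - cos p * sin w))\<^sup>2"
    by (simp add: power2_eq_square algebra_simps)
  also have "\<dots> = (sin b + sin c + sin d - sin a)\<^sup>2"
    unfolding a b c d by (simp add: sin_add sin_diff mult.commute)
  finally show ?thesis .
qed

lemma sin_prod_le:
  fixes a b c d :: real
  assumes "0 < a" "a < pi" "0 < b" "b < pi" "0 < c" "c < pi" "0 < d" "d < pi"
    and "a = b + c + d \<or> a + pi = b + c + d \<or> a + 2 * pi = b + c + d"
  shows "sin a * sin b * sin c * sin d
    \<le> (sin b + sin c + sin d - sin a)\<^sup>2 * (1 + 1300 / (max b c)\<^sup>2 + 1300 / (max (pi - b) (pi - c))\<^sup>2)"
proof -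
  define D where "D = (sin b + sin c + sin d - sin a)\<^sup>2"
  define G1 G2 where "G1 = 1300 / (max b c)\<^sup>2" and "G2 = 1300 / (max (pi - b) (pi - c))\<^sup>2"
  have "D \<ge> 0" "G1 \<ge> 0" "G2 \<ge> 0" unfolding D_def G1_def G2_def by simp_all
  then have D_le: "D * G \<le> D * (1 + G1 + G2)" if "G = 1 \<or> G = G1 \<or> G = G2" for G
    using that by (intro mult_left_mono) auto
  have shrink: "P \<le> K / m\<^sup>2" if "P * x\<^sup>2 \<le> K" "0 < m" "m \<le> x" "0 \<le> K"
    for P K m x :: real
  proof -
    have "P \<le> K / x\<^sup>2" using that by (simp add: pos_le_divide_eq)
    also have "\<dots> \<le> K / m\<^sup>2" using that by (intro divide_left_mono power_mono) auto
    finally show ?thesis .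
  qed
  from assms(9) consider "a = b + c + d" | "a + pi = b + c + d" | "a + 2 * pi = b + c + d"
    by blast
  then have "sin a * sin b * sin c * sin d \<le> D * (1 + G1 + G2)"
  proof cases
    case 1
    then have "sin a * sin b * sin c * sin d * a\<^sup>2 \<le> 1300 * D"
      using sin_prod_le_no_wrap[of b c d] assms unfolding D_def by simp
    moreover have "0 < max b c" "max b c \<le> a" using assms 1 by auto
    ultimately have "sin a * sin b * sin c * sin d \<le> 1300 * D / (max b c)\<^sup>2"
      using \<open>D \<ge> 0\<close> by (intro shrink) auto
    also have "\<dots> = D * G1" unfolding G1_def by simp
    finally show ?thesis using D_le by fastforce
  next
    case 2
    then show ?thesis using sin_prod_le_one_wrap[of a b c d] assms D_le[of 1] unfolding D_def by simp
  next
    case 3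
    then have reflect: "(pi - b) + (pi - c) + (pi - d) = pi - a" by simp
    have "sin a * sin b * sin c * sin d * (pi - a)\<^sup>2 \<le> 1300 * D"
      using sin_prod_le_no_wrap[of "pi - b" "pi - c" "pi - d", unfolded reflect] assms
      unfolding D_def by simp
    moreover have "0 < max (pi - b) (pi - c)" "max (pi - b) (pi - c) \<le> pi - a" using assms 3 by auto
    ultimately have "sin a * sin b * sin c * sin d \<le> 1300 * D / (max (pi - b) (pi - c))\<^sup>2"
      using \<open>D \<ge> 0\<close> by (intro shrink) auto
    also have "\<dots> = D * G2" unfolding G2_def by simp
    finally show ?thesis using D_le by fastforce
  qed
  then show ?thesis unfolding D_def G1_def G2_def .
qed

definition sin_mode :: "int \<Rightarrow> int \<Rightarrow> real" where
  "sin_mode N k = \<bar>sin (pi * k / N)\<bar>"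

text \<open>The weight of \<open>sin_prod_le\<close> at \<open>x = pi k / N\<close>, enlarged using \<open>x \<ge> k / N\<close>.\<close>
definition resonance_weight :: "int \<Rightarrow> int \<Rightarrow> int \<Rightarrow> real" where
  "resonance_weight N b c =
    1 + 1300 * (N / real_of_int (max b c))\<^sup>2 + 1300 * (N / real_of_int (max (N - b) (N - c)))\<^sup>2"

lemma resonance_weight_ge_one: "1 \<le> resonance_weight N b c"
  unfolding resonance_weight_def by simp

lemma resonance_weight_nonneg: "0 \<le> resonance_weight N b c"
  using resonance_weight_ge_one[of N b c] by linarith

lemma dvd_between_cases:
  fixes N x :: int assumes "N dvd x" "- N < x" "x < 3 * N"
  shows "x = 0 \<or> x = N \<or> x = 2 * N"
proof -
  obtain q where q: "x = N * q" using assms(1) by blast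
  have "0 < N" using assms(2,3) by linarith
  moreover have "N * (- 1) < N * q" "N * q < N * 3" using assms(2,3) q by (simp_all add: mult.commute)
  ultimately have "- 1 < q" "q < 3" using mult_less_cancel_left_pos by blast+
  then have "q = 0 \<or> q = 1 \<or> q = 2" by auto
  with q show ?thesis by auto
qed

lemma sin_mode_prod_le:
  fixes N ka kb kc kd :: int
  assumes "0 < ka" "ka < N" "0 < kb" "kb < N" "0 < kc" "kc < N" "0 < kd" "kd < N"
    and "N dvd kb + kc + kd - ka"
  shows "sin_mode N ka * sin_mode N kb * sin_mode N kc * sin_mode N kd
    \<le> (sin_mode N kb + sin_mode N kc + sin_mode N kd - sin_mode N ka)\<^sup>2 * resonance_weight N kb kc"
proof -
  define x where "x k = pi * real_of_int k / N" for k
  have N: "0 < real_of_int N" using assms by linarith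
  have x_range: "0 < x k \<and> x k < pi" if "0 < k" "k < N" for k
    using that N unfolding x_def by (simp add: field_simps)
  have sin_mode_x: "sin_mode N k = sin (x k)" if "0 < k" "k < N" for k
    using x_range[OF that] unfolding sin_mode_def x_def by (simp add: sin_gt_zero less_imp_le)
  define \<delta> where "\<delta> = real_of_int (kb + kc + kd - ka)"
  have "x kb + x kc + x kd - x ka = pi * \<delta> / N"
    unfolding x_def \<delta>_def using N by (simp add: field_simps)
  moreover have "\<delta> \<in> {0, N, 2 * N}"
    using dvd_between_cases[of N "kb + kc + kd - ka"] assms unfolding \<delta>_def by auto
  ultimately have wraps: "x ka = x kb + x kc + x kd \<or> x ka + pi = x kb + x kc + x kd
      \<or> x ka + 2 * pi = x kb + x kc + x kd"
    using N by auto
  have x_max: "max (x kb) (x kc) = x (max kb kc)"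
    and x_max_refl: "max (pi - x kb) (pi - x kc) = x (max (N - kb) (N - kc))"
    unfolding x_def using N by (auto simp: max_def field_simps)
  have inv_sq: "1300 / (x j)\<^sup>2 \<le> 1300 * (N / j)\<^sup>2" if "0 < j" for j :: int
  proof -
    have "real_of_int j / N \<le> x j" unfolding x_def using that N pi_ge_two
      by (simp add: divide_right_mono)
    moreover have "0 < real_of_int j / N" using that N by simp
    ultimately have "1300 / (x j)\<^sup>2 \<le> 1300 / (j / N)\<^sup>2"
      by (intro divide_left_mono power_mono mult_pos_pos) auto
    then show ?thesis by (simp add: power_divide)
  qed
  have "sin (x ka) * sin (x kb) * sin (x kc) * sin (x kd)
      \<le> (sin (x kb) + sin (x kc) + sin (x kd) - sin (x ka))\<^sup>2
        * (1 + 1300 / (max (x kb) (x kc))\<^sup>2 + 1300 / (max (pi - x kb) (pi - x kc))\<^sup>2)"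
    using assms x_range wraps by (intro sin_prod_le) auto
  also have "\<dots> \<le> (sin (x kb) + sin (x kc) + sin (x kd) - sin (x ka))\<^sup>2 * resonance_weight N kb kc"
  proof -
    have "1300 / (max (x kb) (x kc))\<^sup>2 \<le> 1300 * (N / max kb kc)\<^sup>2"
      "1300 / (max (pi - x kb) (pi - x kc))\<^sup>2 \<le> 1300 * (N / max (N - kb) (N - kc))\<^sup>2"
      unfolding x_max x_max_refl using assms by (intro inv_sq; simp)+
    then show ?thesis unfolding resonance_weight_def by (intro mult_left_mono) auto
  qed
  finally show ?thesis using assms by (simp add: sin_mode_x)
qed

lemma omega_eq_sin_mode: "omega \<kappa> m N k = 2 * sqrt (\<kappa> / m) * sin_mode N k"
  unfolding omega_def sin_mode_def ..

lemma omega_nonneg: "0 < \<kappa> \<Longrightarrow> 0 < m \<Longrightarrow> 0 \<le> omega \<kappa> m N k"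
  unfolding omega_def by simp

lemma omega_prod_eq:
  assumes "0 < \<kappa>" "0 < m"
  shows "omega \<kappa> m N k1 * omega \<kappa> m N k2 * omega \<kappa> m N k3 * omega \<kappa> m N k4
    = 16 * (\<kappa> / m)\<^sup>2 * (sin_mode N k1 * sin_mode N k2 * sin_mode N k3 * sin_mode N k4)"
proof -
  have "sqrt (\<kappa> / m) ^ 4 = ((sqrt (\<kappa> / m))\<^sup>2)\<^sup>2" by (simp flip: power_mult)
  also have "\<dots> = (\<kappa> / m)\<^sup>2" using assms by simp
  finally have "sqrt (\<kappa> / m) ^ 4 = (\<kappa> / m)\<^sup>2" .
  then show ?thesis unfolding omega_eq_sin_mode by (simp add: algebra_simps power4_eq_xxxx power2_eq_square)
qed

lemma abs_iota_le: "\<bar>iota N x\<bar> \<le> 1"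
  unfolding iota_def by (simp add: sgn_if)

lemma quartic_coupling_sq_le:
  fixes \<kappa> i1 i2 i3 i4 w1 w2 w3 w4 :: real
  assumes "\<bar>i1\<bar> \<le> 1" "\<bar>i2\<bar> \<le> 1" "\<bar>i3\<bar> \<le> 1" "\<bar>i4\<bar> \<le> 1"
    and "0 \<le> w1" "0 \<le> w2" "0 \<le> w3" "0 \<le> w4"
  shows "(- 3 / (4 * \<kappa>\<^sup>2) * i1 * i2 * i3 * i4 * sqrt w1 * sqrt w2 * sqrt w3 * sqrt w4)\<^sup>2
    \<le> 9 / (16 * \<kappa> ^ 4) * (w1 * w2 * w3 * w4)"
proof -
  have "\<bar>i1 * i2 * i3 * i4\<bar> \<le> 1"
    using assms(1-4) unfolding abs_mult by (intro mult_le_one) (auto intro: mult_le_one)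
  then have I: "(i1 * i2 * i3 * i4)\<^sup>2 \<le> 1" by (simp only: abs_square_le_1)
  have "(- 3 / (4 * \<kappa>\<^sup>2) * i1 * i2 * i3 * i4 * sqrt w1 * sqrt w2 * sqrt w3 * sqrt w4)\<^sup>2
      = 9 / (16 * \<kappa> ^ 4) * (i1 * i2 * i3 * i4)\<^sup>2 * (w1 * w2 * w3 * w4)"
    using assms(5-8) by (simp add: power_mult_distrib power_divide flip: power_mult)
  also have "\<dots> \<le> 9 / (16 * \<kappa> ^ 4) * 1 * (w1 * w2 * w3 * w4)"
    using I assms(5-8) by (intro mult_right_mono mult_left_mono) auto
  finally show ?thesis by simp
qed

lemma Tc_sq_le:
  assumes "0 < \<kappa>" "0 < m"
  shows "(Tc \<kappa> m N k1 k2 k3 k4)\<^sup>2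
    \<le> 9 / (\<kappa> * m)\<^sup>2 * (sin_mode N k1 * sin_mode N k2 * sin_mode N k3 * sin_mode N k4)"
proof -
  have "(Tc \<kappa> m N k1 k2 k3 k4)\<^sup>2 \<le> 9 / (16 * \<kappa> ^ 4)
      * (omega \<kappa> m N k1 * omega \<kappa> m N k2 * omega \<kappa> m N k3 * omega \<kappa> m N k4)"
    unfolding Tc_def using assms by (intro quartic_coupling_sq_le abs_iota_le omega_nonneg)
  also have "\<dots> = 9 / (\<kappa> * m)\<^sup>2
      * (sin_mode N k1 * sin_mode N k2 * sin_mode N k3 * sin_mode N k4)"
    unfolding omega_prod_eq[OF assms] using assms by (simp add: field_simps power2_eq_square power4_eq_xxxx)
  finally show ?thesis .
qed

lemma Tm_sq_le:
  assumes "0 < \<kappa>" "0 < m"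
  shows "(Tm \<kappa> m N k1 k2 k3 k4)\<^sup>2
    \<le> 9 / (\<kappa> * m)\<^sup>2 * (sin_mode N k1 * sin_mode N k2 * sin_mode N k3 * sin_mode N k4)"
proof -
  have "(Tm \<kappa> m N k1 k2 k3 k4)\<^sup>2 \<le> 9 / (16 * \<kappa> ^ 4)
      * (omega \<kappa> m N k1 * omega \<kappa> m N k2 * omega \<kappa> m N k3 * omega \<kappa> m N k4)"
    unfolding Tm_def using assms by (intro quartic_coupling_sq_le abs_iota_le omega_nonneg)
  also have "\<dots> = 9 / (\<kappa> * m)\<^sup>2
      * (sin_mode N k1 * sin_mode N k2 * sin_mode N k3 * sin_mode N k4)"
    unfolding omega_prod_eq[OF assms] using assms by (simp add: field_simps power2_eq_square power4_eq_xxxx)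
  finally show ?thesis .
qed

lemma coefficient_sq_le:
  fixes \<kappa> m T P E G :: real
  assumes "0 < \<kappa>" "0 < m" "T\<^sup>2 \<le> 9 / (\<kappa> * m)\<^sup>2 * P" "P \<le> E\<^sup>2 * G" "0 \<le> G"
  shows "(T / (2 * sqrt (\<kappa> / m) * E))\<^sup>2 \<le> 9 / (4 * \<kappa> ^ 3 * m) * G"
proof (cases "E = 0")
  case True
  then show ?thesis using assms by simp
next
  case False
  have "(T / (2 * sqrt (\<kappa> / m) * E))\<^sup>2 = T\<^sup>2 / (4 * (\<kappa> / m) * E\<^sup>2)"
    using assms by (simp add: power_divide power_mult_distrib)
  also have "\<dots> \<le> 9 / (\<kappa> * m)\<^sup>2 * (E\<^sup>2 * G) / (4 * (\<kappa> / m) * E\<^sup>2)"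
    using assms by (intro divide_right_mono order_trans[OF assms(3)] mult_left_mono) auto
  also have "\<dots> = 9 / (4 * \<kappa> ^ 3 * m) * G"
    using assms False by (simp add: field_simps power2_eq_square power3_eq_cube)
  finally show ?thesis .
qed

lemma A1_sq_le:
  assumes "0 < \<kappa>" "0 < m" "0 < k1" "k1 < N" "0 < k2" "k2 < N" "0 < k3" "k3 < N" "0 < k4" "k4 < N"
    and "(k1 - k2 - k3 - k4) mod N = 0"
  shows "\<bar>A1 \<kappa> m N k1 k2 k3 k4\<bar>\<^sup>2 \<le> 9 / (4 * \<kappa> ^ 3 * m) * resonance_weight N k2 k3"
proof -
  let ?s = "sin_mode N"
  have "N dvd k2 + k3 + k4 - k1"
    using assms(11) by (simp add: mod_eq_0_iff_dvd dvd_diff_commute diff_diff_eq)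
  then have "?s k1 * ?s k2 * ?s k3 * ?s k4 \<le> (?s k2 + ?s k3 + ?s k4 - ?s k1)\<^sup>2 * resonance_weight N k2 k3"
    using assms by (intro sin_mode_prod_le) auto
  also have "(?s k2 + ?s k3 + ?s k4 - ?s k1)\<^sup>2 = (?s k1 - ?s k2 - ?s k3 - ?s k4)\<^sup>2"
    by (simp add: power2_eq_square algebra_simps)
  finally have "(Tc \<kappa> m N k1 k2 k3 k4 / (2 * sqrt (\<kappa> / m) * (?s k1 - ?s k2 - ?s k3 - ?s k4)))\<^sup>2
      \<le> 9 / (4 * \<kappa> ^ 3 * m) * resonance_weight N k2 k3"
    by (rule coefficient_sq_le[OF assms(1,2) Tc_sq_le[OF assms(1,2)]])
      (rule order_trans[OF zero_le_one resonance_weight_ge_one])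
  then show ?thesis
    unfolding A1_def omega_eq_sin_mode by (simp add: power_divide algebra_simps)
qed

lemma A2_sq_le:
  assumes "0 < \<kappa>" "0 < m" "0 < k1" "k1 < N" "0 < k2" "k2 < N" "0 < k3" "k3 < N" "0 < k4" "k4 < N"
    and "(k1 - k2 + k3 + k4) mod N = 0"
  shows "\<bar>A2 \<kappa> m N k1 k2 k3 k4\<bar>\<^sup>2 \<le> 9 / (4 * \<kappa> ^ 3 * m) * resonance_weight N k3 k4"
proof -
  let ?s = "sin_mode N"
  have "N dvd k3 + k4 + k1 - k2"
    using assms(11) by (simp add: mod_eq_0_iff_dvd algebra_simps)
  then have "?s k2 * ?s k3 * ?s k4 * ?s k1 \<le> (?s k3 + ?s k4 + ?s k1 - ?s k2)\<^sup>2 * resonance_weight N k3 k4"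
    using assms by (intro sin_mode_prod_le) auto
  then have "?s k1 * ?s k2 * ?s k3 * ?s k4 \<le> (?s k1 - ?s k2 + ?s k3 + ?s k4)\<^sup>2 * resonance_weight N k3 k4"
    by (simp add: algebra_simps)
  then have "(Tm \<kappa> m N k1 k2 k3 k4 / (2 * sqrt (\<kappa> / m) * (?s k1 - ?s k2 + ?s k3 + ?s k4)))\<^sup>2
      \<le> 9 / (4 * \<kappa> ^ 3 * m) * resonance_weight N k3 k4"
    by (rule coefficient_sq_le[OF assms(1,2) Tm_sq_le[OF assms(1,2)]])
      (rule order_trans[OF zero_le_one resonance_weight_ge_one])
  then show ?thesis
    unfolding A2_def omega_eq_sin_mode by (simp add: power_divide algebra_simps)
qed

lemma A3_sq_le:
  assumes "0 < \<kappa>" "0 < m"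
  shows "\<bar>A3 \<kappa> m N k1 k2 k3 k4\<bar>\<^sup>2 \<le> 9 / (4 * \<kappa> ^ 3 * m) * resonance_weight N k2 k3"
proof -
  let ?s = "sin_mode N"
  have s: "0 \<le> ?s k" "?s k \<le> 1" for k unfolding sin_mode_def by simp_all
  have "?s k3 * ?s k4 \<le> 1" using s by (intro mult_le_one) auto
  then have "?s k1 * ?s k2 * (?s k3 * ?s k4) \<le> ?s k1 * ?s k2"
    using s by (intro mult_left_le) auto
  then have "?s k1 * ?s k2 * ?s k3 * ?s k4 \<le> ?s k1 * ?s k2" by (simp add: mult.assoc)
  also have "\<dots> \<le> (?s k1 + ?s k2 + ?s k3 + ?s k4)\<^sup>2"
    unfolding power2_eq_square using s by (intro mult_mono) (auto intro: add_nonneg_nonneg)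
  also have "\<dots> \<le> (?s k1 + ?s k2 + ?s k3 + ?s k4)\<^sup>2 * resonance_weight N k2 k3"
    using resonance_weight_ge_one[of N k2 k3] by (simp add: mult_le_cancel_left1)
  finally have "(Tc \<kappa> m N k1 k2 k3 k4 / (2 * sqrt (\<kappa> / m) * (?s k1 + ?s k2 + ?s k3 + ?s k4)))\<^sup>2
      \<le> 9 / (4 * \<kappa> ^ 3 * m) * resonance_weight N k2 k3"
    by (rule coefficient_sq_le[OF assms(1,2) Tc_sq_le[OF assms(1,2)]])
      (rule order_trans[OF zero_le_one resonance_weight_ge_one])
  then show ?thesis
    unfolding A3_def omega_eq_sin_mode by (simp add: power_divide algebra_simps)
qed

lemma inverse_sq_max_sum_step:
  fixes k :: int assumes "1 \<le> k"
  shows "(\<Sum>b\<in>{1..k}. \<Sum>c\<in>{1..k}. 1 / (real_of_int (max b c))\<^sup>2)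
    = (\<Sum>b\<in>{1..k - 1}. \<Sum>c\<in>{1..k - 1}. 1 / (real_of_int (max b c))\<^sup>2) + (2 * k - 1) / k\<^sup>2"
proof -
  define f where "f b c = 1 / (real_of_int (max b c))\<^sup>2" for b c
  have split: "{1..k} = insert k {1..k - 1}" using assms by auto
  have edge: "f b k = 1 / k\<^sup>2" "f k b = 1 / k\<^sup>2" if "b \<le> k" for b
    using that unfolding f_def by (simp_all add: max_def)
  have "(\<Sum>b\<in>{1..k}. \<Sum>c\<in>{1..k}. f b c)
      = (\<Sum>c\<in>{1..k}. f k c) + (\<Sum>b\<in>{1..k - 1}. f b k + (\<Sum>c\<in>{1..k - 1}. f b c))"
    unfolding split by simp
  also have "\<dots> = k / k\<^sup>2 + ((k - 1) / k\<^sup>2 + (\<Sum>b\<in>{1..k - 1}. \<Sum>c\<in>{1..k - 1}. f b c))"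
    using assms by (simp add: edge sum.distrib)
  finally show ?thesis unfolding f_def by (simp add: add_divide_distrib diff_divide_distrib)
qed

lemma inverse_sq_max_sum_le:
  fixes n :: int assumes "1 \<le> n"
  shows "(\<Sum>b\<in>{1..n}. \<Sum>c\<in>{1..n}. 1 / (real_of_int (max b c))\<^sup>2) \<le> 2 + 2 * ln n"
  using assms
proof (induction n rule: int_ge_induct)
  case base
  then show ?case by simp
next
  case (step n)
  define x where "x = real_of_int n + 1"
  have x: "0 < x" "x = real_of_int (n + 1)" unfolding x_def using step by simp_all
  have "(2 * x - 1) / x\<^sup>2 \<le> 2 / x"
    using x by (simp add: divide_simps power2_eq_square)
  moreover have "1 / x \<le> ln x - ln n"
  proof -
    have "ln (n / x) \<le> n / x - 1" using step x by (intro ln_le_minus_one) auto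
    moreover have "n / x - 1 = - (1 / x)" using x unfolding x_def by (simp add: field_simps)
    moreover have "ln (n / x) = ln n - ln x" using step x by (simp add: ln_div)
    ultimately show ?thesis by linarith
  qed
  ultimately show ?case
    using step inverse_sq_max_sum_step[of "n + 1"] unfolding x by simp
qed

lemma resonance_weight_sum_le:
  fixes N :: int assumes "2 \<le> N"
  shows "(\<Sum>(b, c)\<in>{1..N - 1} \<times> {1..N - 1}. resonance_weight N b c)
    \<le> (5201 / ln 2 + 5200) * (real_of_int N)\<^sup>2 * ln N"
proof -
  define A where "A = {1..N - 1} \<times> {1..N - 1}"
  define Q where "Q = (\<Sum>(b, c)\<in>A. 1 / (real_of_int (max b c))\<^sup>2)"
  have "Q \<le> 2 + 2 * ln (real_of_int (N - 1))"
    using inverse_sq_max_sum_le[of "N - 1"] assms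
    unfolding Q_def A_def by (simp add: sum.cartesian_product)
  also have "\<dots> \<le> 2 + 2 * ln N" using assms by simp
  finally have Q: "Q \<le> 2 + 2 * ln N" .
  define Q' where "Q' = (\<Sum>(b, c)\<in>A. 1 / (real_of_int (max (N - b) (N - c)))\<^sup>2)"
  have reflect: "Q' = Q"
    unfolding Q_def Q'_def A_def
    by (rule sum.reindex_bij_witness[of _ "\<lambda>(b, c). (N - b, N - c)" "\<lambda>(b, c). (N - b, N - c)"])
      auto
  have "(\<Sum>(b, c)\<in>A. 1 :: real) = (real_of_int N - 1)\<^sup>2"
    unfolding A_def using assms by (simp add: card_cartesian_product power2_eq_square)
  also have "\<dots> \<le> (real_of_int N)\<^sup>2" using assms by (intro power_mono) auto
  finally have "(\<Sum>(b, c)\<in>A. 1 :: real) \<le> (real_of_int N)\<^sup>2" .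
  moreover have "(\<Sum>(b, c)\<in>A. resonance_weight N b c)
      = (\<Sum>(b, c)\<in>A. 1 :: real) + 1300 * (real_of_int N)\<^sup>2 * Q + 1300 * (real_of_int N)\<^sup>2 * Q'"
    unfolding resonance_weight_def Q_def Q'_def
    by (simp add: sum.distrib sum_distrib_left split_def power_divide)
  moreover have "2600 * (real_of_int N)\<^sup>2 * Q \<le> 2600 * (real_of_int N)\<^sup>2 * (2 + 2 * ln N)"
    using Q by (intro mult_left_mono) auto
  ultimately have "(\<Sum>(b, c)\<in>A. resonance_weight N b c)
      \<le> (real_of_int N)\<^sup>2 + 2600 * (real_of_int N)\<^sup>2 * (2 + 2 * ln N)"
    unfolding reflect by linarith
  also have "\<dots> = 5201 * (real_of_int N)\<^sup>2 + 5200 * (real_of_int N)\<^sup>2 * ln N" by (simp add: algebra_simps)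
  also have "\<dots> \<le> (5201 / ln 2 + 5200) * (real_of_int N)\<^sup>2 * ln N"
  proof -
    have "ln 2 \<le> ln N" using assms by simp
    then have "(real_of_int N)\<^sup>2 * ln 2 \<le> (real_of_int N)\<^sup>2 * ln N" by (intro mult_left_mono) auto
    then have "5201 * (real_of_int N)\<^sup>2 \<le> 5201 / ln 2 * (real_of_int N)\<^sup>2 * ln N" by (simp add: field_simps)
    then show ?thesis by (simp add: algebra_simps)
  qed
  finally show ?thesis unfolding A_def .
qed

lemma sum_triples_le_sum_pairs:
  fixes F :: "int \<times> int \<times> int \<Rightarrow> real" and G :: "int \<times> int \<Rightarrow> real"
  assumes "finite P" "\<And>y. y \<in> P \<Longrightarrow> 0 \<le> G y"
    and "\<And>x. x \<in> S \<Longrightarrow> p x \<in> P \<and> s (p x) = x \<and> F x \<le> G (p x)"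
  shows "sum F S \<le> sum G P"
proof (rule sum_le_included[where i = s])
  have "S \<subseteq> s ` P" using assms(3) by (metis imageI subsetI)
  then show "finite S" using assms(1) by (rule finite_subset[OF _ finite_imageI])
  show "\<forall>x\<in>S. \<exists>y\<in>P. s y = x \<and> F x \<le> G y"
  proof
    fix x assume "x \<in> S"
    with assms(3) show "\<exists>y\<in>P. s y = x \<and> F x \<le> G y" by (intro bexI[of _ "p x"]) auto
  qed
qed (use assms in auto)

lemma eq_mod_if_dvd_diff:
  fixes a x N :: int assumes "0 \<le> x" "x < N" "N dvd a - x"
  shows "x = a mod N"
  using assms mod_eq_dvd_iff[of a N x] by simp

lemma sum_A1_sq_le:
  assumes "0 < \<kappa>" "0 < m" "0 < k1" "k1 < N"
  shows "(\<Sum>(k2, k3, k4) \<in> {(k2, k3, k4). 0 < k2 \<and> k2 < N \<and> 0 < k3 \<and> k3 < N \<and> 0 < k4 \<and> k4 < N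
          \<and> (k1 - k2 - k3 - k4) mod N = 0}. \<bar>A1 \<kappa> m N k1 k2 k3 k4\<bar>\<^sup>2)
    \<le> 9 / (4 * \<kappa> ^ 3 * m) * (\<Sum>(b, c)\<in>{1..N - 1} \<times> {1..N - 1}. resonance_weight N b c)"
  unfolding sum_distrib_left
proof (rule sum_triples_le_sum_pairs[where p = "\<lambda>(k2, k3, k4). (k2, k3)"
      and s = "\<lambda>(k2, k3). (k2, k3, (k1 - k2 - k3) mod N)"], goal_cases)
  case (3 x)
  then obtain k2 k3 k4 where x: "x = (k2, k3, k4)"
    and k: "0 < k2" "k2 < N" "0 < k3" "k3 < N" "0 < k4" "k4 < N"
    and res: "(k1 - k2 - k3 - k4) mod N = 0" by auto
  have "k4 = (k1 - k2 - k3) mod N"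
    using k res by (intro eq_mod_if_dvd_diff) (auto simp: mod_eq_0_iff_dvd)
  then show ?case using A1_sq_le[OF assms k res] k unfolding x by auto
qed (use assms resonance_weight_nonneg in auto)

lemma sum_A2_sq_le:
  assumes "0 < \<kappa>" "0 < m" "0 < k1" "k1 < N"
  shows "(\<Sum>(k2, k3, k4) \<in> {(k2, k3, k4). 0 < k2 \<and> k2 < N \<and> 0 < k3 \<and> k3 < N \<and> 0 < k4 \<and> k4 < N
          \<and> (k1 - k2 + k3 + k4) mod N = 0}. \<bar>A2 \<kappa> m N k1 k2 k3 k4\<bar>\<^sup>2)
    \<le> 9 / (4 * \<kappa> ^ 3 * m) * (\<Sum>(b, c)\<in>{1..N - 1} \<times> {1..N - 1}. resonance_weight N b c)"
  unfolding sum_distrib_left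
proof (rule sum_triples_le_sum_pairs[where p = "\<lambda>(k2, k3, k4). (k3, k4)"
      and s = "\<lambda>(k3, k4). ((k1 + k3 + k4) mod N, k3, k4)"], goal_cases)
  case (3 x)
  then obtain k2 k3 k4 where x: "x = (k2, k3, k4)"
    and k: "0 < k2" "k2 < N" "0 < k3" "k3 < N" "0 < k4" "k4 < N"
    and res: "(k1 - k2 + k3 + k4) mod N = 0" by auto
  have "N dvd (k1 + k3 + k4) - k2" using res by (simp add: mod_eq_0_iff_dvd algebra_simps)
  then have "k2 = (k1 + k3 + k4) mod N" using k by (intro eq_mod_if_dvd_diff) auto
  then show ?case using A2_sq_le[OF assms k res] k unfolding x by auto
qed (use assms resonance_weight_nonneg in auto)

lemma sum_A3_sq_le:
  assumes "0 < \<kappa>" "0 < m"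
  shows "(\<Sum>(k2, k3, k4) \<in> {(k2, k3, k4). 0 < k2 \<and> k2 < N \<and> 0 < k3 \<and> k3 < N \<and> 0 < k4 \<and> k4 < N
          \<and> (k1 + k2 + k3 + k4) mod N = 0}. \<bar>A3 \<kappa> m N k1 k2 k3 k4\<bar>\<^sup>2)
    \<le> 9 / (4 * \<kappa> ^ 3 * m) * (\<Sum>(b, c)\<in>{1..N - 1} \<times> {1..N - 1}. resonance_weight N b c)"
  unfolding sum_distrib_left
proof (rule sum_triples_le_sum_pairs[where p = "\<lambda>(k2, k3, k4). (k2, k3)"
      and s = "\<lambda>(k2, k3). (k2, k3, (- k1 - k2 - k3) mod N)"], goal_cases)
  case (3 x)
  then obtain k2 k3 k4 where x: "x = (k2, k3, k4)"
    and k: "0 < k2" "k2 < N" "0 < k3" "k3 < N" "0 < k4" "k4 < N"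
    and res: "(k1 + k2 + k3 + k4) mod N = 0" by auto
  have negate: "(- k1 - k2 - k3) - k4 = - (k1 + k2 + k3 + k4)" by simp
  have "N dvd (- k1 - k2 - k3) - k4"
    unfolding negate dvd_minus_iff using res by (simp add: mod_eq_0_iff_dvd)
  then have "k4 = (- k1 - k2 - k3) mod N" using k by (intro eq_mod_if_dvd_diff) auto
  then show ?case using A3_sq_le[OF assms] k unfolding x by auto
qed (use assms resonance_weight_nonneg in auto)

theorem theorem1:
  fixes \<kappa> m :: real
  assumes "\<kappa> > 0" and "m > 0"
  shows "\<exists>C>0. \<forall>N::int. \<forall>k1::int. N \<ge> 2 \<longrightarrow> 0 < k1 \<longrightarrow> k1 < N \<longrightarrow>
    (\<Sum>(k2, k3, k4) \<in> {(k2, k3, k4). 0 < k2 \<and> k2 < N \<and> 0 < k3 \<and> k3 < N \<and> 0 < k4 \<and> k4 < N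
          \<and> (k1 - k2 - k3 - k4) mod N = 0}.
        \<bar>A1 \<kappa> m N k1 k2 k3 k4\<bar>^2)
  + (\<Sum>(k2, k3, k4) \<in> {(k2, k3, k4). 0 < k2 \<and> k2 < N \<and> 0 < k3 \<and> k3 < N \<and> 0 < k4 \<and> k4 < N
          \<and> (k1 - k2 + k3 + k4) mod N = 0}.
        \<bar>A2 \<kappa> m N k1 k2 k3 k4\<bar>^2)
  + (\<Sum>(k2, k3, k4) \<in> {(k2, k3, k4). 0 < k2 \<and> k2 < N \<and> 0 < k3 \<and> k3 < N \<and> 0 < k4 \<and> k4 < N
          \<and> (k1 + k2 + k3 + k4) mod N = 0}.
        \<bar>A3 \<kappa> m N k1 k2 k3 k4\<bar>^2)
  \<le> C * (real_of_int N)^2 * ln (real_of_int N)"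
proof -
  define K where "K = 9 / (4 * \<kappa> ^ 3 * m)"
  define C0 :: real where "C0 = 5201 / ln 2 + 5200"
  have "0 < K" unfolding K_def using assms by simp
  moreover have "0 < C0" unfolding C0_def by (simp add: add_pos_pos)
  ultimately have "0 < 3 * K * C0" by simp
  then show ?thesis
  proof (intro exI[of _ "3 * K * C0"] conjI allI impI, goal_cases)
    case (2 N k1)
    then have "K * (\<Sum>(b, c)\<in>{1..N - 1} \<times> {1..N - 1}. resonance_weight N b c)
        \<le> K * (C0 * (real_of_int N)\<^sup>2 * ln N)"
      using resonance_weight_sum_le[of N] \<open>0 < K\<close> unfolding C0_def by (intro mult_left_mono) auto
    with 2 show ?case
      using sum_A1_sq_le[OF assms, of k1 N] sum_A2_sq_le[OF assms, of k1 N]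
        sum_A3_sq_le[OF assms, of N k1]
      unfolding K_def[symmetric] by (simp add: algebra_simps)
  qed
qed

end
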